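(* Let $\Sigma,\Gamma$ be finite alphabets, each with at least two letters. For every infinite word $w\in\Sigma^{\mathbb{N}}$, $\mathrm{ACE}_{\mathcal{I}}(w) \le \mathrm{ACE}'_{\mathcal{I}}(w)$.
   Context: $\mathrm{Fact}_n(w)$ is the set of length-$n$ factors of $w$. For a nonempty word $v$ and integer $p\ge0$, $v^{p/|v|}$ is the prefix of length $p$ of $vvv\cdots$. For a nonempty finite word $u$, $\mathrm{E}(u) = \sup\{ r \in \mathbb{Q} : u = v^r \text{ for some nonempty } v\}$. $\mathcal{I}$ is the set of injective morphisms $\Sigma^*\to\Gamma^*$; for a finite nonempty word $u\in\Sigma^+$, $\mathrm{E}_{\mathcal{I}}(u) = \sup\{\mathrm{E}(h(u)) : h\in\mathcal{I}\}$. For an infinite word $w$, $\mathrm{ACE}(w) = \limsup_{n\to\infty}\sup\{\mathrm{E}(u) : u\in\mathrm{Fact}_n(w)\}$, $\mathrm{ACE}_{\mathcal{I}}(w) = \sup\{\mathrm{ACE}(h(w)) : h\in\mathcal{I}\}$, and $\mathrm{ACE}'_{\mathcal{I}}(w) = \limsup_{n\to\infty}\sup\{\mathrm{E}_{\mathcal{I}}(u) : u\in\mathrm{Fact}_n(w)\}$. *)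

theory Defs
  imports Complex_Main "HOL-Library.Extended_Real" "HOL-Library.Liminf_Limsup"
begin

definition Fact :: "nat \<Rightarrow> (nat \<Rightarrow> 'a) \<Rightarrow> 'a list set" where
  "Fact n w = {map w [i..<i+n] | i. True}"

(* v^{p/|v|}: prefix of length p of v v v ... *)
definition pref_pow :: "'a list \<Rightarrow> nat \<Rightarrow> 'a list" where
  "pref_pow v p = map (\<lambda>i. v ! (i mod length v)) [0..<p]"

(* E(u) = sup { r : u = v^r, v nonempty };  u = v^r means r = |u|/|v| and
   u is the prefix of length |u| of v^omega *)
definition Exp :: "'a list \<Rightarrow> ereal" where
  "Exp u = Sup {ereal (real (length u) / real (length v)) | v.
                   v \<noteq> [] \<and> u = pref_pow v (length u)}"

definition morph :: "('a \<Rightarrow> 'b list) \<Rightarrow> 'a list \<Rightarrow> 'b list" where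
  "morph h u = concat (map h u)"

definition Inj_morphs :: "'a set \<Rightarrow> 'b set \<Rightarrow> ('a \<Rightarrow> 'b list) set" where
  "Inj_morphs \<Sigma> \<Gamma> = {h. (\<forall>a\<in>\<Sigma>. set (h a) \<subseteq> \<Gamma>) \<and> inj_on (morph h) (lists \<Sigma>)}"

(* image of an infinite word under a morphism with nonempty images
   (all injective morphisms have nonempty images):
   the n-th letter of h(w) is the n-th letter of h(w_0 ... w_n) *)
definition morph_inf :: "('a \<Rightarrow> 'b list) \<Rightarrow> (nat \<Rightarrow> 'a) \<Rightarrow> nat \<Rightarrow> 'b" where
  "morph_inf h w n = morph h (map w [0..<Suc n]) ! n"

definition ACE :: "(nat \<Rightarrow> 'a) \<Rightarrow> ereal" where
  "ACE w = limsup (\<lambda>n. Sup (Exp ` Fact n w))"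

definition Exp_I :: "'a set \<Rightarrow> 'b set \<Rightarrow> 'a list \<Rightarrow> ereal" where
  "Exp_I \<Sigma> \<Gamma> u = Sup {Exp (morph h u) | h. h \<in> Inj_morphs \<Sigma> \<Gamma>}"

definition ACE_I :: "'a set \<Rightarrow> 'b set \<Rightarrow> (nat \<Rightarrow> 'a) \<Rightarrow> ereal" where
  "ACE_I \<Sigma> \<Gamma> w = Sup {ACE (morph_inf h w) | h. h \<in> Inj_morphs \<Sigma> \<Gamma>}"

definition ACE'_I :: "'a set \<Rightarrow> 'b set \<Rightarrow> (nat \<Rightarrow> 'a) \<Rightarrow> ereal" where
  "ACE'_I \<Sigma> \<Gamma> w = limsup (\<lambda>n. Sup (Exp_I \<Sigma> \<Gamma> ` Fact n w))"

end

theory Submission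
  imports Defs "HOL-Library.Sublist" "HOL-Real_Asymp.Real_Asymp"
begin

text \<open>
  Fix an injective morphism \<open>h\<close>; its images of letters are nonempty, of length at most some \<open>L\<close>.
  A factor \<open>x\<close> of length \<open>n\<close> of \<open>h(w)\<close> contains, up to at most \<open>L\<close> letters at either end,
  the image \<open>h(y)\<close> of a factor \<open>y\<close> of \<open>w\<close> whose length grows linearly with \<open>n\<close>.
  A period of \<open>x\<close> is a period of its factor \<open>h(y)\<close>, so
  \<open>E(x) \<le> n / |h(y)| \<cdot> E(h(y)) \<le> n / (n - 2L) \<cdot> E\<^sub>I(y)\<close>.
  As \<open>n / (n - 2L) \<rightarrow> 1\<close>, taking limsups gives \<open>ACE(h(w)) \<le> ACE'\<^sub>I(w)\<close> for every such \<open>h\<close>.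
\<close>

lemma upt_append: "i \<le> j \<Longrightarrow> j \<le> k \<Longrightarrow> [i..<k] = [i..<j] @ [j..<k]"
  by (metis le_add_diff_inverse upt_add_eq_append)

lemma length_Fact: "x \<in> Fact n w \<Longrightarrow> length x = n"
  by (auto simp: Fact_def)

lemma morph_append: "morph h (xs @ ys) = morph h xs @ morph h ys"
  by (simp add: morph_def)

lemma length_morph_le:
  assumes "set u \<subseteq> \<Sigma>" and "\<forall>a\<in>\<Sigma>. length (h a) \<le> L"
  shows "length (morph h u) \<le> L * length u"
  using assms by (induction u) (auto simp: morph_def)

lemma Inj_morphs_nonempty:
  assumes "h \<in> Inj_morphs \<Sigma> \<Gamma>" and "a \<in> \<Sigma>"
  shows "h a \<noteq> []"
proof
  assume "h a = []"
  then have "morph h [a] = morph h []" by (simp add: morph_def)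
  moreover have "inj_on (morph h) (lists \<Sigma>)" using assms(1) by (simp add: Inj_morphs_def)
  ultimately show False using assms(2) by (simp add: inj_on_eq_iff)
qed

lemma pref_pow_nth: "t < p \<Longrightarrow> pref_pow v p ! t = v ! (t mod length v)"
  by (simp add: pref_pow_def)

lemma length_pref_pow [simp]: "length (pref_pow v p) = p"
  by (simp add: pref_pow_def)

lemma pref_pow_infix:
  assumes u: "u = pref_pow v (length u)" and "v \<noteq> []" and split: "u = p @ y @ q"
  shows "y = pref_pow (rotate (length p) v) (length y)"
proof (rule nth_equalityI)
  fix t assume t: "t < length y"
  have "y ! t = u ! (length p + t)" using split t by (simp add: nth_append)
  also have "\<dots> = v ! ((length p + t) mod length v)"
    using u t split by (metis length_append add_less_cancel_left pref_pow_nth trans_less_add1)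
  also have "\<dots> = rotate (length p) v ! (t mod length v)"
    using \<open>v \<noteq> []\<close> by (simp add: nth_rotate add.commute mod_add_right_eq)
  finally show "y ! t = pref_pow (rotate (length p) v) (length y) ! t"
    using t by (simp add: pref_pow_nth)
qed simp

lemma ratio_le_Exp:
  assumes "u = pref_pow v (length u)" and "v \<noteq> []"
  shows "ereal (real (length u) / real (length v)) \<le> Exp u"
  unfolding Exp_def by (rule Sup_upper) (use assms in blast)

lemma Exp_ge_one:
  assumes "u \<noteq> []"
  shows "1 \<le> Exp u"
proof -
  have "u = pref_pow u (length u)" by (rule nth_equalityI) (simp_all add: pref_pow_nth)
  then show ?thesis using ratio_le_Exp[of u u] assms by (simp add: one_ereal_def)
qed

lemma Exp_le_sublist:
  assumes "sublist y u" and "y \<noteq> []" and "Exp y \<le> ereal c"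
  shows "Exp u \<le> ereal (real (length u) / real (length y) * c)"
  unfolding Exp_def
proof (rule Sup_least)
  fix e assume "e \<in> {ereal (real (length u) / real (length v)) | v.
                       v \<noteq> [] \<and> u = pref_pow v (length u)}"
  then obtain v where v: "v \<noteq> []" "u = pref_pow v (length u)"
    and e: "e = ereal (real (length u) / real (length v))" by blast
  obtain p q where "u = p @ y @ q" using assms(1) by (auto simp: sublist_def)
  then have "y = pref_pow (rotate (length p) v) (length y)"
    using pref_pow_infix v by blast
  then have "ereal (real (length y) / real (length v)) \<le> Exp y"
    using ratio_le_Exp v(1) by fastforce
  then have yv: "real (length y) / real (length v) \<le> c" using assms(3) order_trans by fastforce
  have "real (length u) / real (length v)
        = real (length u) / real (length y) * (real (length y) / real (length v))"
    using assms(2) by simp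
  also have "\<dots> \<le> real (length u) / real (length y) * c"
    using yv by (intro mult_left_mono) auto
  finally show "e \<le> ereal (real (length u) / real (length y) * c)" using e by simp
qed

lemma strict_mono_bracket:
  fixes P :: "nat \<Rightarrow> nat"
  assumes mono: "strict_mono P" and "P 0 \<le> t"
  shows "\<exists>k. P k \<le> t \<and> t < P (Suc k)"
  using \<open>P 0 \<le> t\<close>
proof (induction t)
  case 0
  then show ?case using strict_monoD[OF mono, of 0 1] by (intro exI[of _ 0]) auto
next
  case (Suc t)
  show ?case
  proof (cases "P 0 \<le> t")
    case True
    then obtain k where k: "P k \<le> t" "t < P (Suc k)" using Suc.IH by blast
    show ?thesis
    proof (cases "Suc t < P (Suc k)")
      case True
      then show ?thesis using k by (intro exI[of _ k]) auto
    next
      case False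
      then show ?thesis using k strict_monoD[OF mono, of "Suc k" "Suc (Suc k)"]
        by (intro exI[of _ "Suc k"]) auto
    qed
  next
    case False
    then show ?thesis using Suc.prems strict_monoD[OF mono, of 0 1]
      by (intro exI[of _ 0]) auto
  qed
qed

lemma strict_mono_window:
  fixes P :: "nat \<Rightarrow> nat"
  assumes mono: "strict_mono P" and "P 0 = 0" and gap: "\<And>k. P (Suc k) \<le> P k + L"
    and "2 * L < n"
  obtains j k where "j \<le> k" and "i \<le> P j" and "P k \<le> i + n" and "n \<le> P k - P j + 2 * L"
proof -
  obtain j where j: "P j \<le> i" "i < P (Suc j)"
    using strict_mono_bracket[OF mono, of i] \<open>P 0 = 0\<close> by auto
  obtain k where k: "P k \<le> i + n" "i + n < P (Suc k)"
    using strict_mono_bracket[OF mono, of "i + n"] \<open>P 0 = 0\<close> by auto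
  have "P (Suc j) \<le> i + L" using gap[of j] j by simp
  moreover have "i + n < P k + L" using gap[of k] k by simp
  moreover have "Suc j \<le> k"
  proof (rule ccontr)
    assume "\<not> Suc j \<le> k"
    then have "P k \<le> P j" using mono by (simp add: strict_mono_less_eq)
    then show False using j k \<open>i + n < P k + L\<close> \<open>2 * L < n\<close> by linarith
  qed
  ultimately have "Suc j \<le> k" "i \<le> P (Suc j)" "P k \<le> i + n" "n \<le> P k - P (Suc j) + 2 * L"
    using j k \<open>2 * L < n\<close> by linarith+
  then show thesis by (rule that)
qed

definition morph_pos :: "('a \<Rightarrow> 'b list) \<Rightarrow> (nat \<Rightarrow> 'a) \<Rightarrow> nat \<Rightarrow> nat" where
  "morph_pos h w k = length (morph h (map w [0..<k]))"

lemma morph_pos_0 [simp]: "morph_pos h w 0 = 0"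
  by (simp add: morph_pos_def morph_def)

lemma morph_pos_Suc: "morph_pos h w (Suc k) = morph_pos h w k + length (h (w k))"
  by (simp add: morph_pos_def morph_def)

lemma morph_upt_append:
  "j \<le> k \<Longrightarrow> morph h (map w [0..<k]) = morph h (map w [0..<j]) @ morph h (map w [j..<k])"
  by (simp add: upt_append[of 0 j k] morph_append)

lemma morph_inf_nth:
  assumes mono: "strict_mono (morph_pos h w)" and t: "t < morph_pos h w k"
  shows "morph_inf h w t = morph h (map w [0..<k]) ! t"
proof -
  have "t < morph_pos h w (Suc t)"
    using strict_mono_imp_increasing[OF mono, of "Suc t"] by simp
  then have "morph h (map w [0..<Suc t]) ! t = morph h (map w [0..<max k (Suc t)]) ! t"
    using morph_upt_append[of "Suc t" "max k (Suc t)" h w] by (simp add: morph_pos_def nth_append)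
  also have "\<dots> = morph h (map w [0..<k]) ! t"
    using morph_upt_append[of k "max k (Suc t)" h w] t by (simp add: morph_pos_def nth_append)
  finally show ?thesis by (simp add: morph_inf_def)
qed

lemma morph_inf_upt:
  assumes mono: "strict_mono (morph_pos h w)" and "j \<le> k"
  shows "map (morph_inf h w) [morph_pos h w j..<morph_pos h w k] = morph h (map w [j..<k])"
proof -
  have split: "morph h (map w [0..<k]) = morph h (map w [0..<j]) @ morph h (map w [j..<k])"
    using morph_upt_append[OF \<open>j \<le> k\<close>] .
  then have len: "morph_pos h w k = morph_pos h w j + length (morph h (map w [j..<k]))"
    by (simp add: morph_pos_def)
  show ?thesis
  proof (rule nth_equalityI)
    fix t assume "t < length (map (morph_inf h w) [morph_pos h w j..<morph_pos h w k])"
    then have t: "t < length (morph h (map w [j..<k]))" using len by simp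
    then have "morph_inf h w (morph_pos h w j + t) = morph h (map w [0..<k]) ! (morph_pos h w j + t)"
      using morph_inf_nth[OF mono] len by simp
    also have "\<dots> = morph h (map w [j..<k]) ! t"
      using split by (simp add: morph_pos_def nth_append)
    finally show "map (morph_inf h w) [morph_pos h w j..<morph_pos h w k] ! t
                  = morph h (map w [j..<k]) ! t"
      using t len by simp
  qed (use len in simp)
qed

lemma Fact_morph_inf_contains_image:
  assumes mono: "strict_mono (morph_pos h w)" and L: "\<forall>a\<in>\<Sigma>. length (h a) \<le> L"
    and w: "\<forall>n. w n \<in> \<Sigma>" and "2 * L < n" and x: "x \<in> Fact n (morph_inf h w)"
  obtains m y where "sublist (morph h y) x" and "y \<in> Fact m w"
    and "n \<le> length (morph h y) + 2 * L" and "length (morph h y) \<le> L * m"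
proof -
  obtain i where i: "x = map (morph_inf h w) [i..<i + n]" using x by (auto simp: Fact_def)
  have gap: "morph_pos h w (Suc k) \<le> morph_pos h w k + L" for k
    using L w by (simp add: morph_pos_Suc)
  obtain j k where jk: "j \<le> k" "i \<le> morph_pos h w j" "morph_pos h w k \<le> i + n"
    and long: "n \<le> morph_pos h w k - morph_pos h w j + 2 * L"
    using strict_mono_window[OF mono morph_pos_0 gap \<open>2 * L < n\<close>] by blast
  define y where "y = map w [j..<k]"
  have hy: "morph h y = map (morph_inf h w) [morph_pos h w j..<morph_pos h w k]"
    using morph_inf_upt[OF mono \<open>j \<le> k\<close>] by (simp add: y_def)
  have "morph_pos h w j \<le> morph_pos h w k"
    using mono \<open>j \<le> k\<close> by (simp add: strict_mono_less_eq)
  then have "[i..<i + n] = [i..<morph_pos h w j] @ [morph_pos h w j..<morph_pos h w k]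
                           @ [morph_pos h w k..<i + n]"
    using jk by (simp add: upt_append[symmetric])
  then have "sublist (morph h y) x" unfolding i hy by (metis map_append sublist_appendI)
  moreover have "y \<in> Fact (k - j) w"
    unfolding Fact_def y_def by (intro CollectI exI[of _ j]) (use jk in simp)
  moreover have "n \<le> length (morph h y) + 2 * L" using long by (simp add: hy)
  moreover have "length (morph h y) \<le> L * (k - j)"
    using length_morph_le[of y \<Sigma> h L] L w by (simp add: y_def image_subset_iff)
  ultimately show thesis by (rule that)
qed

lemma Limsup_le_Limsup_scaled:
  fixes f g :: "nat \<Rightarrow> ereal" and r :: "nat \<Rightarrow> real"
  assumes "r \<longlonglongrightarrow> 1"
    and "\<And>c. limsup g < ereal c \<Longrightarrow> eventually (\<lambda>n. f n \<le> ereal (r n * c)) sequentially"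
  shows "limsup f \<le> limsup g"
proof (rule dense_ge)
  fix z assume z: "limsup g < z"
  show "limsup f \<le> z"
  proof (cases z)
    case (real c)
    have "limsup f \<le> limsup (\<lambda>n. ereal (r n * c))"
      by (rule Limsup_mono) (use assms(2) z real in simp)
    also have "\<dots> = ereal c"
      using tendsto_mult[OF assms(1) tendsto_const, of c]
      by (intro lim_imp_Limsup) (simp_all add: tendsto_ereal)
    finally show ?thesis using real by simp
  qed (use z in auto)
qed

lemma strict_mono_morph_pos:
  assumes "\<And>n. h (w n) \<noteq> []"
  shows "strict_mono (morph_pos h w)"
  using assms by (simp add: strict_mono_Suc_iff morph_pos_Suc)

lemma Exp_Fact_morph_inf_le:
  assumes h: "h \<in> Inj_morphs \<Sigma> \<Gamma>" and L: "\<forall>a\<in>\<Sigma>. length (h a) \<le> L" and w: "\<forall>n. w n \<in> \<Sigma>"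
    and E: "\<And>m. M \<le> m \<Longrightarrow> Sup (Exp_I \<Sigma> \<Gamma> ` Fact m w) \<le> ereal c"
    and n: "L * M + 2 * L < n" and x: "x \<in> Fact n (morph_inf h w)"
  shows "Exp x \<le> ereal (real n / (real n - 2 * real L) * c)"
proof -
  have mono: "strict_mono (morph_pos h w)"
    using Inj_morphs_nonempty[OF h] w by (intro strict_mono_morph_pos) blast
  have "2 * L < n" using n by linarith
  then obtain m y where sub: "sublist (morph h y) x" and y: "y \<in> Fact m w"
    and long: "n \<le> length (morph h y) + 2 * L" and short: "length (morph h y) \<le> L * m"
    by (rule Fact_morph_inf_contains_image[OF mono L w _ x])
  have "L * M < L * m" using n long short by linarith
  then have "M \<le> m" by (simp add: mult_less_cancel1)
  have "Exp (morph h y) \<le> Exp_I \<Sigma> \<Gamma> y"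
    unfolding Exp_I_def by (rule Sup_upper) (use h in blast)
  also have "\<dots> \<le> Sup (Exp_I \<Sigma> \<Gamma> ` Fact m w)" using y by (intro Sup_upper) auto
  also have "\<dots> \<le> ereal c" using E[OF \<open>M \<le> m\<close>] .
  finally have hy: "Exp (morph h y) \<le> ereal c" .
  have gap: "0 < real n - 2 * real L" "real n - 2 * real L \<le> real (length (morph h y))"
    using n long by linarith+
  then have "0 < real (length (morph h y))" by linarith
  then have "morph h y \<noteq> []" by auto
  then have "1 \<le> c" using order_trans[OF Exp_ge_one hy] by (simp add: one_ereal_def)
  have "Exp x \<le> ereal (real n / real (length (morph h y)) * c)"
    using Exp_le_sublist[OF sub \<open>morph h y \<noteq> []\<close> hy] length_Fact[OF x] by simp
  also have "\<dots> \<le> ereal (real n / (real n - 2 * real L) * c)"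
    using gap \<open>0 < real (length (morph h y))\<close> \<open>1 \<le> c\<close>
    by (intro iffD2[OF ereal_less_eq(3)] mult_right_mono divide_left_mono) auto
  finally show ?thesis .
qed

lemma ACE_morph_inf_le_ACE'_I:
  assumes h: "h \<in> Inj_morphs \<Sigma> \<Gamma>" and "finite \<Sigma>" and w: "\<forall>n. w n \<in> \<Sigma>"
  shows "ACE (morph_inf h w) \<le> ACE'_I \<Sigma> \<Gamma> w"
proof -
  define L where "L = Max ((\<lambda>a. length (h a)) ` \<Sigma>)"
  have L: "\<forall>a\<in>\<Sigma>. length (h a) \<le> L" using \<open>finite \<Sigma>\<close> by (simp add: L_def)
  have "limsup (\<lambda>n. Sup (Exp ` Fact n (morph_inf h w)))
        \<le> limsup (\<lambda>m. Sup (Exp_I \<Sigma> \<Gamma> ` Fact m w))"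
  proof (rule Limsup_le_Limsup_scaled)
    show "(\<lambda>n. real n / (real n - 2 * real L)) \<longlonglongrightarrow> 1" by real_asymp
  next
    fix c assume "limsup (\<lambda>m. Sup (Exp_I \<Sigma> \<Gamma> ` Fact m w)) < ereal c"
    then have "eventually (\<lambda>m. Sup (Exp_I \<Sigma> \<Gamma> ` Fact m w) < ereal c) sequentially"
      by (rule Limsup_lessD)
    then obtain M where M: "\<And>m. M \<le> m \<Longrightarrow> Sup (Exp_I \<Sigma> \<Gamma> ` Fact m w) \<le> ereal c"
      unfolding eventually_sequentially by (meson less_imp_le)
    have "Sup (Exp ` Fact n (morph_inf h w)) \<le> ereal (real n / (real n - 2 * real L) * c)"
      if "L * M + 2 * L < n" for n
      using Exp_Fact_morph_inf_le[OF h L w M that] by (auto intro: Sup_least)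
    then show "eventually (\<lambda>n. Sup (Exp ` Fact n (morph_inf h w))
                              \<le> ereal (real n / (real n - 2 * real L) * c)) sequentially"
      by (intro eventually_sequentiallyI[of "Suc (L * M + 2 * L)"]) simp
  qed
  then show ?thesis unfolding ACE_def ACE'_I_def .
qed

theorem corollary21:
  fixes \<Sigma> :: "'a set" and \<Gamma> :: "'b set" and w :: "nat \<Rightarrow> 'a"
  assumes "finite \<Sigma>" and "card \<Sigma> \<ge> 2"
    and "finite \<Gamma>" and "card \<Gamma> \<ge> 2"
    and "\<forall>n. w n \<in> \<Sigma>"
  shows "ACE_I \<Sigma> \<Gamma> w \<le> ACE'_I \<Sigma> \<Gamma> w"
  unfolding ACE_I_def
  by (rule Sup_least) (use ACE_morph_inf_le_ACE'_I assms(1,5) in blast)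

end
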